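(* Let $V$ be a vector space of dimension $\mathbf{n}\ge3$ over an algebraically closed field $\mathbf{k}$ of characteristic $p$, with bilinear form $(,)$ and quadratic form $Q$ such that either (i) $Q=0$, $(x,x)=0$ for all $x$, $V^\perp=0$; or (ii) $Q\ne0$, $(x,y)=Q(x+y)-Q(x)-Q(y)$, $Q|_{V^\perp}$ injective. Let $\kappa\in\{0,1\}$ with $\mathbf{n}-\kappa$ even, $n=(\mathbf{n}-\kappa)/2$, and assume that $Q=0$ or $p=2$. Let $p_1\ge\dots\ge p_\sigma\ge1$ be integers with sum $n$ (and $p_{\sigma+1}=1/2$ if $\kappa=1$). Let $g\in Is(V)$ be unipotent, $N=g-1$, and assume that the multiset of sizes of the Jordan blocks of $N$ on $V$ consists of $2p_1,2p_2,\dots,2p_\sigma$ (and $1$ if $\kappa=1$). Let $(w^t_i)_{t\in[1,\sigma+\kappa],i\in\mathbb{Z}}$ be a $(g,p_* )$-adapted collection. Then: (a) for $t\in[1,\sigma]$ and $\pi=p_t$: $(w^t_i,w^t_j)=\mathrm{sg}(j-i)\binom{|j-i|+\pi-1}{|j-i|-\pi}$ if $|j-i|\ge\pi$, and $(w^t_i,w^t_j)=0$ if $|j-i|<\pi$; (b) if $\kappa=1$, $(w^{\sigma+1}_i,w^{\sigma+1}_j)=0$ for all $i,j\in\mathbb{Z}$; (c) $(w^t_i,w^r_j)=0$ for all $t\ne r$ in $[1,\sigma+\kappa]$ and all $i,j\in\mathbb{Z}$.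
   Context: $V^\perp=\{x\in V;(x,V)=0\}$; $Is(V)$ is the group of $g\in GL(V)$ preserving $(,)$ and $Q$. For $i\in\mathbb{Z}-\{0\}$, $\mathrm{sg}(i)\in\{1,-1\}$ is the sign of $i$. A collection $w^t_i\in V$ is $(g,p_* )$-adapted if: (a) $w^t_{i+1}=gw^t_i$; (b) for $t\in[1,\sigma]$, $(w^t_i,w^t_j)=0$ if $|i-j|<p_t$ and $=1$ if $j-i=p_t$; (c) $(w^t_i,w^r_j)=0$ if $0\le i-j+p_r<2p_t$ and $1\le t<r\le\sigma$; (d) if $\kappa=1$, $(w^{\sigma+1}_i,w^{\sigma+1}_i)=2$; (e) if $\kappa=1$, $(w^t_i,w^{\sigma+1}_j)=0$ whenever $0\le i-j<2p_t$, $1\le t\le\sigma$; (f) $Q(w^t_i)=0$ for $t\in[1,\sigma]$ and $Q(w^{\sigma+1}_i)=1$ if $\kappa=1$. *)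

theory Defs
  imports "HOL-Computational_Algebra.Polynomial" "Jordan_Normal_Form.Jordan_Normal_Form"
begin

text \<open>The space V is carrier_vec nn (column vectors of length nn over the field).\<close>

definition bilinear_on :: "nat \<Rightarrow> ('k::field vec \<Rightarrow> 'k vec \<Rightarrow> 'k) \<Rightarrow> bool" where
  "bilinear_on nn B \<longleftrightarrow>
     (\<forall>x\<in>carrier_vec nn. \<forall>y\<in>carrier_vec nn. \<forall>z\<in>carrier_vec nn. \<forall>a.
        B (x + y) z = B x z + B y z \<and> B x (y + z) = B x y + B x z \<and>
        B (a \<cdot>\<^sub>v x) y = a * B x y \<and> B x (a \<cdot>\<^sub>v y) = a * B x y)"

definition quadratic_form_on :: "nat \<Rightarrow> ('k::field vec \<Rightarrow> 'k) \<Rightarrow> bool" where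
  "quadratic_form_on nn Q \<longleftrightarrow>
     (\<forall>x\<in>carrier_vec nn. \<forall>a. Q (a \<cdot>\<^sub>v x) = a^2 * Q x) \<and>
     bilinear_on nn (\<lambda>x y. Q (x + y) - Q x - Q y)"

definition perp_space :: "nat \<Rightarrow> ('k::field vec \<Rightarrow> 'k vec \<Rightarrow> 'k) \<Rightarrow> 'k vec set" where
  "perp_space nn B = {x \<in> carrier_vec nn. \<forall>y\<in>carrier_vec nn. B x y = 0}"

definition isometry_group :: "nat \<Rightarrow> ('k::field vec \<Rightarrow> 'k vec \<Rightarrow> 'k) \<Rightarrow> ('k vec \<Rightarrow> 'k) \<Rightarrow> 'k mat set" where
  "isometry_group nn B Q = {g \<in> carrier_mat nn nn. invertible_mat g \<and>
     (\<forall>x\<in>carrier_vec nn. \<forall>y\<in>carrier_vec nn. B (g *\<^sub>v x) (g *\<^sub>v y) = B x y) \<and>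
     (\<forall>x\<in>carrier_vec nn. Q (g *\<^sub>v x) = Q x)}"

definition unipotent :: "nat \<Rightarrow> 'k::field mat \<Rightarrow> bool" where
  "unipotent nn g \<longleftrightarrow> (\<exists>m. (g - 1\<^sub>m nn) ^\<^sub>m m = 0\<^sub>m nn nn)"

definition sg :: "int \<Rightarrow> int" where "sg i = (if i > 0 then 1 else -1)"

text \<open>(g,p_*)-adapted collection; indices t in [1, sigma+kappa], i in Z.
  The partition p is given as a function on {1..sigma}.\<close>
definition adapted ::
  "nat \<Rightarrow> ('k::field vec \<Rightarrow> 'k vec \<Rightarrow> 'k) \<Rightarrow> ('k vec \<Rightarrow> 'k) \<Rightarrow> 'k mat \<Rightarrow>
   nat \<Rightarrow> nat \<Rightarrow> (nat \<Rightarrow> nat) \<Rightarrow> (nat \<Rightarrow> int \<Rightarrow> 'k vec) \<Rightarrow> bool" where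
  "adapted nn B Q g \<kappa> \<sigma> p w \<longleftrightarrow>
     (\<forall>t\<in>{1..\<sigma>+\<kappa>}. \<forall>i. w t i \<in> carrier_vec nn) \<and>
     (\<forall>t\<in>{1..\<sigma>+\<kappa>}. \<forall>i. w t (i + 1) = g *\<^sub>v w t i) \<and>
     (\<forall>t\<in>{1..\<sigma>}. \<forall>i j. (\<bar>i - j\<bar> < int (p t) \<longrightarrow> B (w t i) (w t j) = 0) \<and>
                        (j - i = int (p t) \<longrightarrow> B (w t i) (w t j) = 1)) \<and>
     (\<forall>t r i j. 1 \<le> t \<and> t < r \<and> r \<le> \<sigma> \<and> 0 \<le> i - j + int (p r) \<and> i - j + int (p r) < 2 * int (p t)
          \<longrightarrow> B (w t i) (w r j) = 0) \<and>
     (\<kappa> = 1 \<longrightarrow> (\<forall>i. B (w (\<sigma>+1) i) (w (\<sigma>+1) i) = 2)) \<and>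
     (\<kappa> = 1 \<longrightarrow> (\<forall>t\<in>{1..\<sigma>}. \<forall>i j. 0 \<le> i - j \<and> i - j < 2 * int (p t) \<longrightarrow> B (w t i) (w (\<sigma>+1) j) = 0)) \<and>
     (\<forall>t\<in>{1..\<sigma>}. \<forall>i. Q (w t i) = 0) \<and>
     (\<kappa> = 1 \<longrightarrow> (\<forall>i. Q (w (\<sigma>+1) i) = 1))"

end

theory Submission
  imports Defs "Jordan_Normal_Form.Jordan_Normal_Form_Uniqueness"
begin

text \<open>
  Since \<open>w\<^sup>t\<^sub>i\<^sub>+\<^sub>1 = g w\<^sup>t\<^sub>i\<close>, the operator \<open>N = g - 1\<close> acts on a chain as the forward difference
  in \<open>i\<close>. Once \<open>N^(2p)\<close> kills chain \<open>t\<close> (with \<open>p = p\<^sub>t\<close>), the function \<open>j \<mapsto> (w\<^sup>t\<^sub>i, w\<^sup>t\<^sub>j)\<close> has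
  vanishing \<open>2p\<close>-th difference, so it is a polynomial of degree \<open>< 2p\<close> in \<open>j\<close>; the \<open>2p\<close> values
  prescribed by adaptedness pin it down as the binomial coefficient \<open>(j - i + p - 1 choose 2p - 1)\<close>.
  In the same way the windows of zeros in the definition of an adapted collection make
  distinct chains orthogonal.

  That \<open>N^(2p\<^sub>t)\<close> kills chain \<open>t\<close> (and \<open>N\<close> kills the extra chain) is proved by induction on \<open>t\<close>.
  With \<open>k\<close> the block size of chain \<open>t\<close>, the vectors \<open>N^(2p\<^sub>s - 1 - e) w\<^sup>s\<^sub>0\<close> for \<open>s < t\<close> and
  \<open>e < 2p\<^sub>s - k\<close> lie in the image of \<open>N^k\<close>; pairing them with \<open>w\<^sup>s\<^sub>p\<^sub>s\<^sub>-\<^sub>1\<^sub>-\<^sub>v\<close> gives the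
  unitriangular matrix \<open>(v choose e)\<close>, so they are independent, and by the Jordan type there are
  exactly \<open>rank N^k\<close> of them. Hence \<open>N^k w\<^sup>t\<^sub>b\<close> is a combination of them, and since chain \<open>t\<close>
  is orthogonal to the earlier chains, all coefficients vanish. The extra chain is then
  constant, and its self-pairing vanishes because the form is alternating or the
  characteristic is 2.
\<close>

section \<open>Forward differences of functions on the integers\<close>

definition fwd_diff :: "(int \<Rightarrow> 'b::minus) \<Rightarrow> int \<Rightarrow> 'b" where
  "fwd_diff f m = f (m + 1) - f m"

lemma funpow_fwd_diff_Suc: "(fwd_diff ^^ Suc a) f = (fwd_diff ^^ a) (fwd_diff f)"
  by (simp only: funpow_Suc_right comp_def)

lemma funpow_fwd_diff_diff:
  fixes f h :: "int \<Rightarrow> 'a::ab_group_add"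
  shows "(fwd_diff ^^ a) (\<lambda>m. f m - h m) = (\<lambda>m. (fwd_diff ^^ a) f m - (fwd_diff ^^ a) h m)"
proof (induction a arbitrary: f h)
  case (Suc a)
  have "fwd_diff (\<lambda>m. f m - h m) = (\<lambda>m. fwd_diff f m - fwd_diff h m)"
    by (rule ext) (simp add: fwd_diff_def algebra_simps)
  then show ?case unfolding funpow_fwd_diff_Suc using Suc[of "fwd_diff f" "fwd_diff h"] by simp
qed simp

lemma funpow_fwd_diff_of_int:
  fixes h :: "int \<Rightarrow> int"
  shows "(fwd_diff ^^ a) (\<lambda>m. (of_int (h m) :: 'a::ring_1)) = (\<lambda>m. of_int ((fwd_diff ^^ a) h m))"
proof (induction a arbitrary: h)
  case (Suc a)
  have "fwd_diff (\<lambda>m. (of_int (h m) :: 'a)) = (\<lambda>m. of_int (fwd_diff h m))"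
    by (rule ext) (simp add: fwd_diff_def)
  then show ?case unfolding funpow_fwd_diff_Suc using Suc[of "fwd_diff h"] by simp
qed simp

lemma funpow_fwd_diff_zero: "(fwd_diff ^^ a) (\<lambda>_. (0::'a::ab_group_add)) = (\<lambda>_. 0)"
  by (induction a) (auto simp: fwd_diff_def)

lemma int_fun_const_if_shift_eq:
  fixes f :: "int \<Rightarrow> 'a"
  assumes "\<And>m. f (m + 1) = f m"
  shows "f m = f m0"
proof -
  have up: "f (m0 + int k) = f m0" for k
  proof (induction k)
    case (Suc k)
    have "f (m0 + int (Suc k)) = f (m0 + int k + 1)" by (simp add: ac_simps)
    also have "\<dots> = f (m0 + int k)" by (rule assms)
    finally show ?case using Suc by simp
  qed simp
  have down: "f (m0 - int k) = f m0" for k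
  proof (induction k)
    case (Suc k)
    have "f (m0 - int (Suc k)) = f (m0 - int (Suc k) + 1)" by (rule assms[symmetric])
    also have "m0 - int (Suc k) + 1 = m0 - int k" by simp
    finally show ?case using Suc by simp
  qed simp
  show ?thesis
  proof (cases "m \<ge> m0")
    case True
    then have "m = m0 + int (nat (m - m0))" by simp
    then show ?thesis using up by metis
  next
    case False
    then have "m = m0 - int (nat (m0 - m))" by simp
    then show ?thesis using down by metis
  qed
qed

lemma funpow_fwd_diff_zero_imp_zero:
  fixes f :: "int \<Rightarrow> 'a::ab_group_add"
  assumes "\<And>m. (fwd_diff ^^ n) f m = 0" and "\<And>i. i < n \<Longrightarrow> f (m0 + int i) = 0"
  shows "f m = 0"
  using assms
proof (induction n arbitrary: f m)
  case (Suc n)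
  have diff_zero: "fwd_diff f m' = 0" for m'
  proof (rule Suc.IH)
    show "(fwd_diff ^^ n) (fwd_diff f) m = 0" for m
      using Suc.prems(1)[of m] unfolding funpow_fwd_diff_Suc .
    show "fwd_diff f (m0 + int i) = 0" if "i < n" for i
      using Suc.prems(2)[of i] Suc.prems(2)[of "Suc i"] that by (simp add: fwd_diff_def ac_simps)
  qed
  have "f m = f m0"
    by (rule int_fun_const_if_shift_eq) (use diff_zero in \<open>simp add: fwd_diff_def\<close>)
  also have "f m0 = 0" using Suc.prems(2)[of 0] by simp
  finally show ?case .
qed simp

section \<open>Binomial coefficients with integer upper argument\<close>

text \<open>\<open>int_binomial x d\<close> is \<open>x gchoose d\<close>, computed in \<^typ>\<open>int\<close> so that it can be mapped into
  fields of any characteristic.\<close>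

definition int_binomial :: "int \<Rightarrow> nat \<Rightarrow> int" where
  "int_binomial x d =
     (if x \<ge> 0 then int (nat x choose d) else (-1)^d * int ((nat (-x) + d - 1) choose d))"

lemma of_int_int_binomial: "(of_int (int_binomial x d) :: rat) = of_int x gchoose d"
proof (cases "x \<ge> 0")
  case True
  then have "(of_int x :: rat) = of_nat (nat x)" by simp
  then show ?thesis using True by (simp add: int_binomial_def binomial_gbinomial)
next
  case False
  define m where "m = nat (-x)"
  have m1: "m \<ge> 1" using False m_def by simp
  have x: "(of_int x :: rat) = - of_nat m" using False m_def by simp
  have "(of_int x :: rat) gchoose d = (-1)^d * (of_nat d - of_int x - 1 gchoose d)"
    by (rule gbinomial_negated_upper)
  also have "(of_nat d - of_int x - 1 :: rat) = of_nat (m + d - 1)" using x m1 by simp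
  finally show ?thesis using False m_def by (simp add: int_binomial_def binomial_gbinomial)
qed

lemma int_binomial_0 [simp]: "int_binomial x 0 = 1"
  by (simp add: int_binomial_def)

lemma int_binomial_Suc_Suc: "int_binomial (x + 1) (Suc d) = int_binomial x (Suc d) + int_binomial x d"
proof -
  have "(of_int (int_binomial (x + 1) (Suc d)) :: rat) = of_int (int_binomial x (Suc d) + int_binomial x d)"
    unfolding of_int_add of_int_int_binomial by (simp add: gbinomial_Suc_Suc)
  then show ?thesis by (simp only: of_int_eq_iff)
qed

lemma fwd_diff_int_binomial:
  "fwd_diff (\<lambda>m. int_binomial (m + c) (Suc d)) = (\<lambda>m. int_binomial (m + c) d)"
proof (rule ext)
  fix m
  have "m + 1 + c = (m + c) + 1" by simp
  then show "fwd_diff (\<lambda>m. int_binomial (m + c) (Suc d)) m = int_binomial (m + c) d"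
    unfolding fwd_diff_def using int_binomial_Suc_Suc[of "m + c" d] by (metis add_diff_cancel_left')
qed

lemma funpow_fwd_diff_int_binomial:
  "(fwd_diff ^^ a) (\<lambda>m. int_binomial (m + c) (d + a)) = (\<lambda>m. int_binomial (m + c) d)"
proof (induction a arbitrary: d)
  case (Suc a)
  have "fwd_diff (\<lambda>m. int_binomial (m + c) (d + Suc a)) = (\<lambda>m. int_binomial (m + c) (d + a))"
    using fwd_diff_int_binomial[of c "d + a"] by simp
  then show ?case unfolding funpow_fwd_diff_Suc using Suc by simp
qed simp

lemma funpow_fwd_diff_int_binomial_vanish:
  "(fwd_diff ^^ Suc d) (\<lambda>m. int_binomial (m + c) d) = (\<lambda>m. 0)"
proof -
  have "(fwd_diff ^^ Suc d) (\<lambda>m. int_binomial (m + c) d)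
      = fwd_diff ((fwd_diff ^^ d) (\<lambda>m. int_binomial (m + c) (0 + d)))" by simp
  also have "\<dots> = fwd_diff (\<lambda>m. int_binomial (m + c) 0)" by (simp only: funpow_fwd_diff_int_binomial)
  also have "\<dots> = (\<lambda>m. 0)" by (rule ext) (simp add: fwd_diff_def)
  finally show ?thesis .
qed

lemma int_binomial_centered:
  assumes "\<pi> \<ge> 1"
  shows "int_binomial (m + (int \<pi> - 1)) (2 * \<pi> - 1) =
    (if \<bar>m\<bar> \<ge> int \<pi> then sg m * int ((nat \<bar>m\<bar> + \<pi> - 1) choose (nat \<bar>m\<bar> - \<pi>)) else 0)"
proof -
  consider "m \<ge> int \<pi>" | "\<bar>m\<bar> < int \<pi>" | "m \<le> - int \<pi>" by linarith
  then show ?thesis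
  proof cases
    case 1
    define k where "k = nat m"
    have mk: "m = int k" using 1 k_def by simp
    have "int_binomial (m + (int \<pi> - 1)) (2 * \<pi> - 1) = int ((k + \<pi> - 1) choose (2 * \<pi> - 1))"
      using 1 assms by (simp add: int_binomial_def mk nat_add_distrib nat_diff_distrib)
    also have "(k + \<pi> - 1) choose (2 * \<pi> - 1) = (k + \<pi> - 1) choose (k - \<pi>)"
      using 1 assms mk by (subst binomial_symmetric) (auto intro: arg_cong2[where f = "(choose)"])
    finally show ?thesis using 1 assms mk by (simp add: sg_def)
  next
    case 2
    have "nat (m + (int \<pi> - 1)) < 2 * \<pi> - 1" using 2 assms by linarith
    then show ?thesis using 2 by (simp add: int_binomial_def)
  next
    case 3
    define k where "k = nat (-m)"
    have mk: "m = - int k" using 3 k_def by simp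
    have kp: "k \<ge> \<pi>" using 3 mk by simp
    have "int_binomial (m + (int \<pi> - 1)) (2 * \<pi> - 1) = - int ((k + \<pi> - 1) choose (2 * \<pi> - 1))"
    proof -
      have "\<not> m + (int \<pi> - 1) \<ge> 0" using 3 assms by simp
      moreover have "nat (- (m + (int \<pi> - 1))) + (2 * \<pi> - 1) - 1 = k + \<pi> - 1"
        using kp assms mk by simp
      moreover have "odd (2 * \<pi> - 1)" using assms by simp
      ultimately show ?thesis unfolding int_binomial_def by simp
    qed
    also have "(k + \<pi> - 1) choose (2 * \<pi> - 1) = (k + \<pi> - 1) choose (k - \<pi>)"
      using kp assms by (subst binomial_symmetric) (auto intro: arg_cong2[where f = "(choose)"])
    finally show ?thesis using 3 assms mk kp by (simp add: sg_def)
  qed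
qed

lemma binomial_combination_zero_imp_coeffs_zero:
  fixes c :: "nat \<Rightarrow> 'a::field"
  assumes "\<And>v. (\<Sum>e<L. c e * of_nat (v choose e)) = 0"
  shows "e < L \<Longrightarrow> c e = 0"
proof (induction e rule: less_induct)
  case (less e)
  have "(\<Sum>e'<L. c e' * of_nat (e choose e')) = (\<Sum>e'<L. if e' = e then c e else 0)"
  proof (rule sum.cong)
    fix e' assume "e' \<in> {..<L}"
    then show "c e' * of_nat (e choose e') = (if e' = e then c e else 0)"
      using less.IH[of e'] by (cases "e' < e") (auto simp: binomial_eq_0)
  qed simp
  also have "\<dots> = c e" using less.prems by simp
  finally show ?case using assms[of e] by simp
qed

section \<open>Bilinear forms on \<open>carrier_vec n\<close>\<close>

lemma minus_vec_eq_add_smult: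
  "y \<in> carrier_vec n \<Longrightarrow> z \<in> carrier_vec n \<Longrightarrow> y - z = y + (-1::'a::field) \<cdot>\<^sub>v z"
  by (intro eq_vecI) auto

lemma bilinear_on_diff_right:
  assumes B: "bilinear_on n B" and x: "x \<in> carrier_vec n" and y: "y \<in> carrier_vec n"
    and z: "z \<in> carrier_vec n"
  shows "B x (y - z) = B x y - B x z"
proof -
  have "B x (y - z) = B x y + B x ((-1) \<cdot>\<^sub>v z)"
    using B x y z unfolding minus_vec_eq_add_smult[OF y z] bilinear_on_def by (meson smult_carrier_vec)
  also have "B x ((-1) \<cdot>\<^sub>v z) = - B x z" using B x z unfolding bilinear_on_def by (metis mult_minus1)
  finally show ?thesis by simp
qed

lemma bilinear_on_diff_left:
  assumes B: "bilinear_on n B" and x: "x \<in> carrier_vec n" and y: "y \<in> carrier_vec n"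
    and z: "z \<in> carrier_vec n"
  shows "B (y - z) x = B y x - B z x"
proof -
  have "B (y - z) x = B y x + B ((-1) \<cdot>\<^sub>v z) x"
    using B x y z unfolding minus_vec_eq_add_smult[OF y z] bilinear_on_def by (meson smult_carrier_vec)
  also have "B ((-1) \<cdot>\<^sub>v z) x = - B z x" using B x z unfolding bilinear_on_def by (metis mult_minus1)
  finally show ?thesis by simp
qed

lemma bilinear_on_zero_left:
  assumes B: "bilinear_on n B" and x: "x \<in> carrier_vec n"
  shows "B (0\<^sub>v n) x = 0"
  using bilinear_on_diff_left[OF B x zero_carrier_vec zero_carrier_vec] by simp

lemma bilinear_on_zero_right:
  assumes B: "bilinear_on n B" and x: "x \<in> carrier_vec n"
  shows "B x (0\<^sub>v n) = 0"
  using bilinear_on_diff_right[OF B x zero_carrier_vec zero_carrier_vec] by simp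

lemma alternating_bilinear_on_skew:
  assumes B: "bilinear_on n B" and alt: "\<forall>x\<in>carrier_vec n. B x x = 0"
    and x: "x \<in> carrier_vec n" and y: "y \<in> carrier_vec n"
  shows "B y x = - B x y"
proof -
  have "B (x + y) (x + y) = B x x + B x y + (B y x + B y y)"
    using B x y unfolding bilinear_on_def by (simp add: add_carrier_vec)
  then show ?thesis using alt x y by (simp add: add_eq_0_iff)
qed

lemma bilinear_on_finsum_right:
  fixes f :: "'i \<Rightarrow> 'a::field vec"
  assumes B: "bilinear_on n B" and u: "u \<in> carrier_vec n" and I: "finite I"
    and f: "\<And>i. i \<in> I \<Longrightarrow> f i \<in> carrier_vec n"
  shows "B u (finsum (module_vec TYPE('a) n) (\<lambda>i. c i \<cdot>\<^sub>v f i) I) = (\<Sum>i\<in>I. c i * B u (f i))"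
  using I f
proof (induction I rule: finite_induct)
  case empty
  interpret vec_space "TYPE('a)" n .
  show ?case using bilinear_on_zero_right[OF B u] by simp
next
  case (insert x F)
  interpret vec_space "TYPE('a)" n .
  have fF: "(\<lambda>i. c i \<cdot>\<^sub>v f i) \<in> F \<rightarrow> carrier_vec n" using insert.prems by auto
  have fx: "c x \<cdot>\<^sub>v f x \<in> carrier_vec n" using insert.prems by auto
  have S: "finsum V (\<lambda>i. c i \<cdot>\<^sub>v f i) F \<in> carrier_vec n" using fF by (rule finsum_closed)
  have "B u (finsum V (\<lambda>i. c i \<cdot>\<^sub>v f i) (insert x F))
      = B u (c x \<cdot>\<^sub>v f x) + B u (finsum V (\<lambda>i. c i \<cdot>\<^sub>v f i) F)"
    using B u fx S finsum_insert[OF insert.hyps fF fx] unfolding bilinear_on_def by simp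
  also have "B u (c x \<cdot>\<^sub>v f x) = c x * B u (f x)"
    using B u insert.prems unfolding bilinear_on_def by simp
  also have "B u (finsum V (\<lambda>i. c i \<cdot>\<^sub>v f i) F) = (\<Sum>i\<in>F. c i * B u (f i))"
    using insert.IH insert.prems by simp
  finally show ?case using insert.hyps by simp
qed

lemma bilinear_on_funpow_fwd_diff_right:
  assumes B: "bilinear_on n B" and u: "u \<in> carrier_vec n" and w: "\<And>i. w i \<in> carrier_vec n"
  shows "B u ((fwd_diff ^^ a) w m) = (fwd_diff ^^ a) (\<lambda>j. B u (w j)) m"
  using w
proof (induction a arbitrary: w m)
  case (Suc a)
  have "\<And>i. fwd_diff w i \<in> carrier_vec n" using Suc.prems by (simp add: fwd_diff_def)
  moreover have "(\<lambda>j. B u (fwd_diff w j)) = fwd_diff (\<lambda>j. B u (w j))"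
    by (rule ext) (simp add: fwd_diff_def bilinear_on_diff_right[OF B u Suc.prems Suc.prems])
  ultimately show ?case unfolding funpow_fwd_diff_Suc by (simp add: Suc.IH)
qed simp

lemma bilinear_on_funpow_fwd_diff_left:
  assumes B: "bilinear_on n B" and u: "u \<in> carrier_vec n" and w: "\<And>i. w i \<in> carrier_vec n"
  shows "B ((fwd_diff ^^ a) w m) u = (fwd_diff ^^ a) (\<lambda>j. B (w j) u) m"
  using w
proof (induction a arbitrary: w m)
  case (Suc a)
  have "\<And>i. fwd_diff w i \<in> carrier_vec n" using Suc.prems by (simp add: fwd_diff_def)
  moreover have "(\<lambda>j. B (fwd_diff w j) u) = fwd_diff (\<lambda>j. B (w j) u)"
    by (rule ext) (simp add: fwd_diff_def bilinear_on_diff_left[OF B u Suc.prems Suc.prems])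
  ultimately show ?case unfolding funpow_fwd_diff_Suc by (simp add: Suc.IH)
qed simp

lemma pow_mat_add:
  fixes A :: "'a::semiring_1 mat"
  assumes A: "A \<in> carrier_mat n n"
  shows "A ^\<^sub>m (a + b) = A ^\<^sub>m a * A ^\<^sub>m b"
proof (induction b)
  case (Suc b)
  have "A ^\<^sub>m (a + Suc b) = A ^\<^sub>m a * A ^\<^sub>m b * A" using Suc by simp
  also have "\<dots> = A ^\<^sub>m a * (A ^\<^sub>m b * A)"
    by (rule assoc_mult_mat[OF pow_carrier_mat[OF A] pow_carrier_mat[OF A] A])
  finally show ?case by simp
qed (use A in simp)

lemma vec_eq_if_diff_zero:
  fixes a :: "'a::ab_group_add vec"
  assumes "a \<in> carrier_vec n" and "b \<in> carrier_vec n" and "a - b = 0\<^sub>v n"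
  shows "a = b"
proof (rule eq_vecI)
  fix i assume i: "i < dim_vec b"
  have "(a - b) $ i = 0" using assms i by simp
  then show "a $ i = b $ i" using i by simp
qed (use assms in simp)

lemma pow_minus_one_mult_vec_eq_fwd_diff:
  fixes g :: "'a::field mat"
  assumes g: "g \<in> carrier_mat n n" and w: "\<And>i. w i \<in> carrier_vec n"
    and shift: "\<And>i. w (i + 1) = g *\<^sub>v w i"
  shows "((g - 1\<^sub>m n) ^\<^sub>m a) *\<^sub>v w m = (fwd_diff ^^ a) w m"
  using w shift
proof (induction a arbitrary: w m)
  case (Suc a)
  have N: "g - 1\<^sub>m n \<in> carrier_mat n n" using g by (metis minus_carrier_mat one_carrier_mat)
  have diff: "(g - 1\<^sub>m n) *\<^sub>v w i = fwd_diff w i" for i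
    using minus_mult_distrib_mat_vec[OF g _ Suc.prems(1)[of i], of "1\<^sub>m n"] Suc.prems
    by (simp add: fwd_diff_def)
  have "\<And>i. fwd_diff w i \<in> carrier_vec n" unfolding fwd_diff_def using Suc.prems(1) by simp
  moreover have "fwd_diff w (i + 1) = g *\<^sub>v fwd_diff w i" for i
    unfolding fwd_diff_def Suc.prems(2)[of "i + 1"] Suc.prems(2)[of i]
    by (rule mult_minus_distrib_mat_vec[symmetric, OF g]) (use Suc.prems(1) g in simp_all)
  ultimately have "((g - 1\<^sub>m n) ^\<^sub>m a) *\<^sub>v fwd_diff w m = (fwd_diff ^^ a) (fwd_diff w) m"
    by (rule Suc.IH)
  moreover have "((g - 1\<^sub>m n) ^\<^sub>m Suc a) *\<^sub>v w m = ((g - 1\<^sub>m n) ^\<^sub>m a) *\<^sub>v ((g - 1\<^sub>m n) *\<^sub>v w m)"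
    by (simp add: assoc_mult_mat_vec[OF pow_carrier_mat[OF N] N Suc.prems(1)])
  ultimately show ?case unfolding funpow_fwd_diff_Suc diff by simp
qed simp

lemma char_matrix_0: "A \<in> carrier_mat n n \<Longrightarrow> char_matrix A (0::'a::field) = A"
  unfolding char_matrix_def by (intro eq_matI) auto

lemma kernel_dim_zero_mat: "kernel_dim (0\<^sub>m n n :: 'a::field mat) = n"
proof -
  interpret K: kernel n n "0\<^sub>m n n :: 'a mat" by unfold_locales auto
  have "mat_kernel (0\<^sub>m n n :: 'a mat) = carrier_vec n" by (auto simp: mat_kernel_def)
  then have "K.dim = vectorspace.dim class_ring (module_vec TYPE('a) n\<lparr>carrier := carrier_vec n\<rparr>)"
    by simp
  also have "module_vec TYPE('a) n\<lparr>carrier := carrier_vec n\<rparr> = module_vec TYPE('a) n"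
    using K.NC.carrier_vs_is_self by simp
  finally show ?thesis using K.NC.dim_is_n by simp
qed

lemma jordan_nf_sum_block_sizes:
  assumes "A \<in> carrier_mat n n" and "jordan_nf A n_as"
  shows "sum_list (map fst n_as) = n"
proof -
  obtain m P Q where "{A, jordan_matrix n_as, P, Q} \<subseteq> carrier_mat m m"
    using similar_matD[of A "jordan_matrix n_as"] assms(2) unfolding jordan_nf_def by blast
  then have "A \<in> carrier_mat m m" "jordan_matrix n_as \<in> carrier_mat m m" by auto
  then show ?thesis using assms(1) jordan_matrix_carrier[of n_as] by (metis carrier_matD(1))
qed

lemma jordan_nf_nilpotent_eigenvalues:
  fixes A :: "'a::field mat"
  assumes A: "A \<in> carrier_mat n n" and nil: "A ^\<^sub>m m = 0\<^sub>m n n" and jnf: "jordan_nf A n_as"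
  shows "x \<in> set n_as \<Longrightarrow> snd x = 0"
proof (rule ccontr)
  assume x: "x \<in> set n_as" and nz: "snd x \<noteq> 0"
  let ?zero = "filter (\<lambda>(d, e). e = 0) n_as" and ?nonzero = "filter (\<lambda>y. \<not> (\<lambda>(d, e). e = 0) y) n_as"
  have "n = dim_gen_eigenspace A 0 m"
    unfolding dim_gen_eigenspace_def char_matrix_0[OF A] nil kernel_dim_zero_mat ..
  also have "\<dots> = sum_list (map (min m) (map fst ?zero))"
    by (rule dim_gen_eigenspace[OF jnf])
  also have "\<dots> \<le> sum_list (map fst ?zero)"
    by (induction n_as) auto
  finally have "n \<le> sum_list (map fst ?zero)" .
  moreover have "sum_list (map fst n_as) = sum_list (map fst ?zero) + sum_list (map fst ?nonzero)"
    by (induction n_as) auto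
  moreover have "fst x \<le> sum_list (map fst ?nonzero)"
    using x nz by (intro member_le_sum_list) (auto split: prod.splits)
  moreover have "fst x > 0" using jnf x unfolding jordan_nf_def by force
  ultimately show False using jordan_nf_sum_block_sizes[OF A jnf] by linarith
qed

lemma kernel_dim_pow_nilpotent_jordan_nf:
  fixes A :: "'a::field mat"
  assumes A: "A \<in> carrier_mat n n" and nil: "A ^\<^sub>m m = 0\<^sub>m n n" and jnf: "jordan_nf A n_as"
  shows "kernel_dim (A ^\<^sub>m k) = sum_list (map (min k) (map fst n_as))"
proof -
  have "kernel_dim (A ^\<^sub>m k) = dim_gen_eigenspace A 0 k"
    unfolding dim_gen_eigenspace_def char_matrix_0[OF A] ..
  also have "\<dots> = sum_list (map (min k) (map fst (filter (\<lambda>(d, e). e = 0) n_as)))"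
    by (rule dim_gen_eigenspace[OF jnf])
  also have "filter (\<lambda>(d, e). e = 0) n_as = n_as"
    using jordan_nf_nilpotent_eigenvalues[OF A nil jnf] by (intro filter_True) auto
  finally show ?thesis .
qed

section \<open>Spanning the image of a matrix\<close>

lemma inj_on_if_finsum_indep:
  fixes f :: "'i \<Rightarrow> 'a::field vec"
  assumes I: "finite I" and fI: "f ` I \<subseteq> carrier_vec n"
    and indep: "\<And>c. finsum (module_vec TYPE('a) n) (\<lambda>i. c i \<cdot>\<^sub>v f i) I = 0\<^sub>v n \<Longrightarrow> \<forall>i\<in>I. c i = 0"
  shows "inj_on f I"
proof (rule inj_onI, rule ccontr)
  interpret vec_space "TYPE('a)" n .
  fix i j assume i: "i \<in> I" and j: "j \<in> I" and fij: "f i = f j" and ne: "i \<noteq> j"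
  define c where "c = (\<lambda>k. if k = i then (1::'a) else if k = j then -1 else 0)"
  have fv: "\<And>k. k \<in> I \<Longrightarrow> f k \<in> carrier_vec n" using fI by auto
  have "I = {i, j} \<union> (I - {i, j})" using i j by blast
  then have "finsum V (\<lambda>k. c k \<cdot>\<^sub>v f k) I
      = finsum V (\<lambda>k. c k \<cdot>\<^sub>v f k) ({i, j} \<union> (I - {i, j}))" by simp
  also have "\<dots> = finsum V (\<lambda>k. c k \<cdot>\<^sub>v f k) {i, j} + finsum V (\<lambda>k. c k \<cdot>\<^sub>v f k) (I - {i, j})"
    by (rule finsum_Un_disjoint) (use I i j fv in auto)
  also have "finsum V (\<lambda>k. c k \<cdot>\<^sub>v f k) (I - {i, j}) = 0\<^sub>v n"
    by (rule finsum_all0) (use fv in \<open>auto simp: c_def\<close>)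
  also have "finsum V (\<lambda>k. c k \<cdot>\<^sub>v f k) {i, j} = 1 \<cdot>\<^sub>v f i + (-1) \<cdot>\<^sub>v f j"
    using ne fv[OF i] fv[OF j] by (simp add: finsum_insert c_def)
  also have "(-1) \<cdot>\<^sub>v f j = - f j" by auto
  also have "1 \<cdot>\<^sub>v f i + - f j + 0\<^sub>v n = 0\<^sub>v n" using fij fv[OF j] by simp
  finally have "\<forall>k\<in>I. c k = 0" by (rule indep)
  then have "c i = 0" using i by blast
  then show False by (simp add: c_def)
qed

lemma (in vec_space) dim_col_space_plus_kernel_dim:
  assumes M: "M \<in> carrier_mat n n"
  shows "vectorspace.dim class_ring (V\<lparr>carrier := col_space M\<rparr>) + kernel_dim M = n"
proof -
  define T where "T = (\<lambda>v. M *\<^sub>v v)"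
  have lm: "linear_map class_ring V V T"
    unfolding linear_map_def mod_hom_def mod_hom_axioms_def
  proof (intro conjI)
    show "T \<in> module_hom class_ring V V"
      unfolding module_hom_def T_def using M by (auto simp: mult_add_distrib_mat_vec mult_mat_vec)
  qed (rule vec_vs vec_module)+
  interpret lm: linear_map class_ring V V T by (rule lm)
  have mh: "mod_hom class_ring V V T" using lm unfolding linear_map_def by auto
  have "T ` carrier_vec n = col_space M" unfolding col_space_eq[OF M] T_def using M by auto
  then have imT: "lm.imT = col_space M" using mod_hom.im_def[OF mh] by simp
  have kerT: "lm.kerT = mat_kernel M"
    using mod_hom.ker_def[OF mh] unfolding mat_kernel[OF M] T_def using M by auto
  interpret K: kernel n n M by (unfold_locales, rule M)
  show ?thesis
    using lm.rank_nullity[OF fin_dim] unfolding imT kerT dim_is_n K.kernel_dim .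
qed

lemma mult_mat_vec_in_span_of_indep:
  fixes M :: "'a::field mat" and f :: "'i \<Rightarrow> 'a vec"
  assumes M: "M \<in> carrier_mat n n" and I: "finite I" and fI: "f ` I \<subseteq> carrier_vec n"
    and indep: "\<And>c. finsum (module_vec TYPE('a) n) (\<lambda>i. c i \<cdot>\<^sub>v f i) I = 0\<^sub>v n \<Longrightarrow> \<forall>i\<in>I. c i = 0"
    and img: "\<And>i. i \<in> I \<Longrightarrow> \<exists>z\<in>carrier_vec n. f i = M *\<^sub>v z"
    and card: "n \<le> card I + kernel_dim M"
    and z: "z \<in> carrier_vec n"
  shows "\<exists>c. M *\<^sub>v z = finsum (module_vec TYPE('a) n) (\<lambda>i. c i \<cdot>\<^sub>v f i) I"
proof -
  interpret vec_space "TYPE('a)" n .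
  define Y where "Y = f ` I"
  have Yc: "Y \<subseteq> carrier_vec n" using fI Y_def by auto
  have finY: "finite Y" using I Y_def by auto
  have cardY: "card Y = card I"
    using inj_on_if_finsum_indep[OF I fI indep] Y_def card_image by auto
  have lc: "lincomb a Y = finsum V (\<lambda>i. a (f i) \<cdot>\<^sub>v f i) I" for a
    unfolding lincomb_def Y_def
    by (rule finsum_reindex) (use fI inj_on_if_finsum_indep[OF I fI indep] in auto)
  have liY: "lin_indpt Y"
  proof (rule finite_lin_indpt2[OF finY Yc])
    fix a assume "lincomb a Y = 0\<^sub>v n"
    then have "\<forall>i\<in>I. a (f i) = 0" using lc by (intro indep) simp
    then show "\<forall>v\<in>Y. a v = 0" unfolding Y_def by auto
  qed
  have sub: "subspace class_ring (col_space M) V"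
    unfolding col_space_def using M by (metis cols_dim carrier_matD(1) span_is_subspace)
  have vsIM: "vectorspace class_ring (V\<lparr>carrier := col_space M\<rparr>)"
    by (rule subspace_is_vs[OF sub])
  have fdIM: "vectorspace.fin_dim class_ring (V\<lparr>carrier := col_space M\<rparr>)"
    using fin_dim_span_cols[OF M] unfolding col_space_def .
  have subm: "submodule class_ring (col_space M) V" using sub unfolding subspace_def by auto
  have YIM: "Y \<subseteq> col_space M"
    unfolding col_space_eq[OF M] Y_def using M img fI by force
  have "vectorspace.basis class_ring (V\<lparr>carrier := col_space M\<rparr>) Y"
    by (rule vectorspace.dim_li_is_basis[OF vsIM fdIM finY])
      (use YIM span_li_not_depend(2)[OF YIM subm] liY dim_col_space_plus_kernel_dim[OF M] card cardY
        in auto)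
  then have "module.span class_ring (V\<lparr>carrier := col_space M\<rparr>) Y = col_space M"
    using vectorspace.basis_def[OF vsIM] by auto
  then have "span Y = col_space M" using span_li_not_depend(1)[OF YIM subm] by simp
  moreover have "M *\<^sub>v z \<in> col_space M" unfolding col_space_eq[OF M] using M z by auto
  ultimately obtain a where "M *\<^sub>v z = lincomb a Y" using finite_span[OF finY Yc] by auto
  then show ?thesis using lc by auto
qed

lemma finsum_smult_zero_coeffs:
  fixes f :: "'i \<Rightarrow> 'a::field vec"
  assumes "\<And>i. i \<in> I \<Longrightarrow> f i \<in> carrier_vec n" and "\<And>i. i \<in> I \<Longrightarrow> c i = 0"
  shows "finsum (module_vec TYPE('a) n) (\<lambda>i. c i \<cdot>\<^sub>v f i) I = 0\<^sub>v n"
proof -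
  interpret vec_space "TYPE('a)" n .
  show ?thesis by (rule finsum_all0) (use assms in auto)
qed

section \<open>Adapted collections\<close>

locale adapted_collection =
  fixes nn \<kappa> \<sigma> :: nat
    and B :: "'k::field vec \<Rightarrow> 'k vec \<Rightarrow> 'k"
    and Q :: "'k vec \<Rightarrow> 'k"
    and g :: "'k mat"
    and p :: "nat \<Rightarrow> nat"
    and n_as :: "(nat \<times> 'k) list"
    and w :: "nat \<Rightarrow> int \<Rightarrow> 'k vec"
  assumes B_bilinear: "bilinear_on nn B"
    and B_reflexive: "\<And>x y. x \<in> carrier_vec nn \<Longrightarrow> y \<in> carrier_vec nn \<Longrightarrow> B x y = 0 \<Longrightarrow> B y x = 0"
    and kappa: "\<kappa> \<in> {0, 1}"
    and p_mono: "\<And>t s. 1 \<le> t \<Longrightarrow> t \<le> s \<Longrightarrow> s \<le> \<sigma> \<Longrightarrow> p s \<le> p t"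
    and p_pos: "\<And>t. t \<in> {1..\<sigma>} \<Longrightarrow> p t \<ge> 1"
    and g_carrier: "g \<in> carrier_mat nn nn"
    and g_unipotent: "unipotent nn g"
    and jnf: "jordan_nf (g - 1\<^sub>m nn) n_as"
    and blocks: "mset (map fst n_as) =
                   image_mset (\<lambda>t. 2 * p t) (mset_set {1..\<sigma>}) + (if \<kappa> = 1 then {#1#} else {#})"
    and adapt: "adapted nn B Q g \<kappa> \<sigma> p w"
begin

abbreviation N :: "'k mat" where "N \<equiv> g - 1\<^sub>m nn"

lemma N_carrier: "N \<in> carrier_mat nn nn"
  using g_carrier by (metis minus_carrier_mat one_carrier_mat)

lemma w_carrier: "t \<in> {1..\<sigma>+\<kappa>} \<Longrightarrow> w t i \<in> carrier_vec nn"
  using adapt unfolding adapted_def by blast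

lemma w_succ: "t \<in> {1..\<sigma>+\<kappa>} \<Longrightarrow> w t (i + 1) = g *\<^sub>v w t i"
  using adapt unfolding adapted_def by blast

lemma form_near_diagonal: "t \<in> {1..\<sigma>} \<Longrightarrow> \<bar>i - j\<bar> < int (p t) \<Longrightarrow> B (w t i) (w t j) = 0"
  using adapt unfolding adapted_def by blast

lemma form_at_distance_p: "t \<in> {1..\<sigma>} \<Longrightarrow> j - i = int (p t) \<Longrightarrow> B (w t i) (w t j) = 1"
  using adapt unfolding adapted_def by blast

lemma form_cross_window:
  "1 \<le> t \<Longrightarrow> t < r \<Longrightarrow> r \<le> \<sigma> \<Longrightarrow> 0 \<le> i - j + int (p r) \<Longrightarrow> i - j + int (p r) < 2 * int (p t)
    \<Longrightarrow> B (w t i) (w r j) = 0"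
  using adapt unfolding adapted_def by blast

lemma form_extra_window:
  "\<kappa> = 1 \<Longrightarrow> t \<in> {1..\<sigma>} \<Longrightarrow> 0 \<le> i - j \<Longrightarrow> i - j < 2 * int (p t) \<Longrightarrow> B (w t i) (w (\<sigma>+1) j) = 0"
  using adapt unfolding adapted_def by blast

lemma N_pow_mult_w:
  assumes "t \<in> {1..\<sigma>+\<kappa>}"
  shows "(N ^\<^sub>m a) *\<^sub>v w t m = (fwd_diff ^^ a) (w t) m"
  by (rule pow_minus_one_mult_vec_eq_fwd_diff[where w = "w t", OF g_carrier w_carrier[OF assms] w_succ[OF assms]])

lemma sum_block_sizes: "nn = (\<Sum>t\<in>{1..\<sigma>}. 2 * p t) + \<kappa>"
proof -
  have "nn = sum_list (map fst n_as)" using jordan_nf_sum_block_sizes[OF N_carrier jnf] ..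
  also have "\<dots> = sum_mset (mset (map fst n_as))" by (metis sum_mset_sum_list)
  also have "\<dots> = (\<Sum>t\<in>{1..\<sigma>}. 2 * p t) + \<kappa>"
    unfolding blocks using kappa by (auto simp: sum_unfold_sum_mset)
  finally show ?thesis .
qed

lemma kernel_dim_N_pow:
  assumes k: "k \<ge> 1"
  shows "kernel_dim (N ^\<^sub>m k) = (\<Sum>t\<in>{1..\<sigma>}. min k (2 * p t)) + \<kappa>"
proof -
  obtain m where nil: "N ^\<^sub>m m = 0\<^sub>m nn nn" using g_unipotent unfolding unipotent_def by blast
  have "kernel_dim (N ^\<^sub>m k) = sum_list (map (min k) (map fst n_as))"
    by (rule kernel_dim_pow_nilpotent_jordan_nf[OF N_carrier nil jnf])
  also have "\<dots> = sum_mset (image_mset (min k) (mset (map fst n_as)))"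
    by (metis mset_map sum_mset_sum_list)
  also have "\<dots> = (\<Sum>t\<in>{1..\<sigma>}. min k (2 * p t)) + \<kappa>"
    unfolding blocks using k kappa
    by (auto simp: sum_unfold_sum_mset image_mset.compositionality o_def)
  finally show ?thesis .
qed

definition block_size :: "nat \<Rightarrow> nat" where
  "block_size t = (if t \<le> \<sigma> then 2 * p t else 1)"

definition annihilated :: "nat \<Rightarrow> bool" where
  "annihilated t \<longleftrightarrow> (\<forall>b. (N ^\<^sub>m block_size t) *\<^sub>v w t b = 0\<^sub>v nn)"

lemma annihilated_fwd_diff:
  "t \<in> {1..\<sigma>} \<Longrightarrow> annihilated t \<Longrightarrow> (fwd_diff ^^ (2 * p t)) (w t) m = 0\<^sub>v nn"
  using N_pow_mult_w[where t = t and a = "2 * p t" and m = m] unfolding annihilated_def block_size_def by auto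

lemma form_same_chain:
  assumes s: "s \<in> {1..\<sigma>}" and ann: "annihilated s"
  shows "B (w s i) (w s j) = of_int (int_binomial (j - i + (int (p s) - 1)) (2 * p s - 1))"
proof -
  have ps: "p s \<ge> 1" using p_pos[OF s] .
  have ws: "\<And>i. w s i \<in> carrier_vec nn" using s by (intro w_carrier) auto
  define f where "f = (\<lambda>j. B (w s i) (w s j) - of_int (int_binomial (j + (int (p s) - 1 - i)) (2 * p s - 1)))"
  have "f j = 0"
  proof (rule funpow_fwd_diff_zero_imp_zero[of "2 * p s" f "i - int (p s) + 1"])
    have "Suc (2 * p s - 1) = 2 * p s" using ps by simp
    then have "(fwd_diff ^^ (2 * p s)) (\<lambda>j. int_binomial (j + (int (p s) - 1 - i)) (2 * p s - 1)) = (\<lambda>_. 0)"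
      using funpow_fwd_diff_int_binomial_vanish by metis
    moreover have "(fwd_diff ^^ (2 * p s)) (\<lambda>j. B (w s i) (w s j)) m = 0" for m
      using bilinear_on_funpow_fwd_diff_right[where w = "w s" and a = "2 * p s" and m = m, OF B_bilinear ws ws]
        annihilated_fwd_diff[OF s ann] bilinear_on_zero_right[OF B_bilinear ws] by simp
    ultimately show "(fwd_diff ^^ (2 * p s)) f m = 0" for m
      unfolding f_def funpow_fwd_diff_diff funpow_fwd_diff_of_int by simp
  next
    fix idx assume idx: "idx < 2 * p s"
    define j where "j = i - int (p s) + 1 + int idx"
    have "int_binomial (j + (int (p s) - 1 - i)) (2 * p s - 1) =
       (if \<bar>j - i\<bar> \<ge> int (p s) then sg (j - i) * int ((nat \<bar>j - i\<bar> + p s - 1) choose (nat \<bar>j - i\<bar> - p s)) else 0)"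
      using int_binomial_centered[OF ps, of "j - i"] by (simp add: algebra_simps)
    moreover have "B (w s i) (w s j) = (if idx = 2 * p s - 1 then 1 else 0)"
      using form_at_distance_p[OF s] form_near_diagonal[OF s] idx ps unfolding j_def by auto
    moreover have "\<bar>j - i\<bar> \<ge> int (p s) \<longleftrightarrow> idx = 2 * p s - 1" "idx = 2 * p s - 1 \<Longrightarrow> j - i = int (p s)"
      using idx ps unfolding j_def by auto
    ultimately show "f (i - int (p s) + 1 + int idx) = 0"
      unfolding f_def j_def[symmetric] by (auto simp: sg_def)
  qed
  then show ?thesis unfolding f_def by (simp add: algebra_simps)
qed

lemma form_later_chain_zero:
  assumes s: "s \<in> {1..\<sigma>}" and ann: "annihilated s" and sr: "s < r" and r: "r \<in> {1..\<sigma>+\<kappa>}"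
  shows "B (w s i) (w r j) = 0"
proof -
  define f where "f = (\<lambda>i. B (w s i) (w r j))"
  have ws: "\<And>i. w s i \<in> carrier_vec nn" using s by (intro w_carrier) auto
  have diff_zero: "(fwd_diff ^^ (2 * p s)) f m = 0" for m
    using bilinear_on_funpow_fwd_diff_left[where w = "w s" and a = "2 * p s" and m = m, OF B_bilinear w_carrier[OF r] ws]
      annihilated_fwd_diff[OF s ann] bilinear_on_zero_left[OF B_bilinear w_carrier[OF r]]
    unfolding f_def by simp
  have "f i = 0"
  proof (cases "r \<le> \<sigma>")
    case True
    show ?thesis
      by (rule funpow_fwd_diff_zero_imp_zero[of "2 * p s" f "j - int (p r)", OF diff_zero])
        (use s sr True in \<open>auto simp: f_def intro: form_cross_window\<close>)
  next
    case False
    then have "\<kappa> = 1" "r = \<sigma> + 1" using r kappa by auto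
    show ?thesis
    proof (rule funpow_fwd_diff_zero_imp_zero[of "2 * p s" f j, OF diff_zero])
      fix idx assume "idx < 2 * p s"
      then show "f (j + int idx) = 0"
        unfolding f_def \<open>r = \<sigma> + 1\<close> using form_extra_window[OF \<open>\<kappa> = 1\<close> s] by simp
    qed
  qed
  then show ?thesis unfolding f_def .
qed

lemma form_distinct_chains_zero:
  assumes s: "s \<in> {1..\<sigma>+\<kappa>}" and r: "r \<in> {1..\<sigma>+\<kappa>}" and sr: "s \<noteq> r"
    and ann: "annihilated (min s r)"
  shows "B (w s i) (w r j) = 0"
proof (cases "s < r")
  case True
  then show ?thesis using form_later_chain_zero[OF _ _ True r] s r kappa ann by auto
next
  case False
  then have "r < s" using sr by simp
  then have "B (w r j) (w s i) = 0" using form_later_chain_zero[OF _ _ _ s] s r kappa ann by auto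
  then show ?thesis using B_reflexive w_carrier[OF s] w_carrier[OF r] by blast
qed

text \<open>In the induction step for chain \<open>t\<close>, the vectors \<open>lower_vec i\<close> with \<open>i \<in> lower_index t\<close>
  turn out to be a basis of the image of \<open>N\<^bsup>block_size t\<^esup>\<close>.\<close>

definition lower_index :: "nat \<Rightarrow> (nat \<times> nat) set" where
  "lower_index t = Sigma {1..<t} (\<lambda>s. {..<2 * p s - block_size t})"

definition lower_vec :: "nat \<times> nat \<Rightarrow> 'k vec" where
  "lower_vec = (\<lambda>(s, e). (N ^\<^sub>m (2 * p s - 1 - e)) *\<^sub>v w s 0)"

lemma lower_index_chain:
  "(s, e) \<in> lower_index t \<Longrightarrow> t \<in> {1..\<sigma>+\<kappa>} \<Longrightarrow> s \<in> {1..\<sigma>} \<and> s < t \<and> e < 2 * p s - block_size t"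
  using kappa unfolding lower_index_def by auto

lemma lower_vec_Pair: "lower_vec (s, e) = (N ^\<^sub>m (2 * p s - 1 - e)) *\<^sub>v w s 0"
  unfolding lower_vec_def by simp

lemma finite_lower_index: "finite (lower_index t)"
  unfolding lower_index_def by simp

lemma lower_vec_carrier:
  assumes t: "t \<in> {1..\<sigma>+\<kappa>}" and i: "i \<in> lower_index t"
  shows "lower_vec i \<in> carrier_vec nn"
proof -
  obtain s e where ise: "i = (s, e)" by force
  have "s \<in> {1..\<sigma>+\<kappa>}" using lower_index_chain[OF i[unfolded ise] t] by auto
  then show ?thesis
    unfolding ise lower_vec_Pair by (rule mult_mat_vec_carrier[OF pow_carrier_mat[OF N_carrier] w_carrier])
qed

lemma form_lower_vec_same_chain:
  assumes s: "s \<in> {1..\<sigma>}" and ann: "annihilated s" and e: "e < 2 * p s"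
  shows "B (w s (int (p s) - 1 - int v)) (lower_vec (s, e)) = of_nat (v choose e)"
proof -
  define j where "j = int (p s) - 1 - int v"
  have s': "s \<in> {1..\<sigma>+\<kappa>}" using s by auto
  have "B (w s j) (lower_vec (s, e)) = (fwd_diff ^^ (2 * p s - 1 - e)) (\<lambda>m. B (w s j) (w s m)) 0"
    unfolding lower_vec_Pair N_pow_mult_w[OF s']
    by (rule bilinear_on_funpow_fwd_diff_right[where w = "w s", OF B_bilinear w_carrier[OF s'] w_carrier[OF s']])
  also have "(\<lambda>m. B (w s j) (w s m)) = (\<lambda>m. of_int (int_binomial (m + int v) (e + (2 * p s - 1 - e))))"
    using form_same_chain[OF s ann] e unfolding j_def by (simp add: algebra_simps)
  also have "(fwd_diff ^^ (2 * p s - 1 - e)) \<dots> 0 = of_int (int_binomial (0 + int v) e)"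
    by (simp only: funpow_fwd_diff_of_int funpow_fwd_diff_int_binomial)
  finally show ?thesis by (simp add: int_binomial_def j_def)
qed

lemma form_lower_vec_other_chain:
  assumes s: "s \<in> {1..\<sigma>+\<kappa>}" and s': "s' \<in> {1..\<sigma>+\<kappa>}" and ne: "s \<noteq> s'"
    and ann: "annihilated (min s s')"
  shows "B (w s j) (lower_vec (s', e)) = 0"
proof -
  have "B (w s j) (lower_vec (s', e)) = (fwd_diff ^^ (2 * p s' - 1 - e)) (\<lambda>m. B (w s j) (w s' m)) 0"
    unfolding lower_vec_Pair N_pow_mult_w[OF s']
    by (rule bilinear_on_funpow_fwd_diff_right[where w = "w s'", OF B_bilinear w_carrier[OF s] w_carrier[OF s']])
  also have "(\<lambda>m. B (w s j) (w s' m)) = (\<lambda>_. 0)"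
    using form_distinct_chains_zero[OF s s' ne ann] by auto
  finally show ?thesis by (simp add: funpow_fwd_diff_zero)
qed

lemma form_lower_combination:
  assumes t: "t \<in> {1..\<sigma>+\<kappa>}" and earlier: "\<And>s. s \<in> {1..<t} \<Longrightarrow> annihilated s"
    and s: "s \<in> {1..<t}"
  shows "B (w s (int (p s) - 1 - int v))
           (finsum (module_vec TYPE('k) nn) (\<lambda>i. c i \<cdot>\<^sub>v lower_vec i) (lower_index t))
       = (\<Sum>e<2 * p s - block_size t. c (s, e) * of_nat (v choose e))"
proof -
  let ?u = "w s (int (p s) - 1 - int v)"
  have chain: "s' \<in> {1..\<sigma>+\<kappa>}" if "s' \<in> {1..<t}" for s' using that t kappa by auto
  have s_chain: "s \<in> {1..\<sigma>}" using s t kappa by auto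
  have pair: "B ?u (lower_vec (s', e)) = (if s' = s then of_nat (v choose e) else 0)"
    if i: "(s', e) \<in> lower_index t" for s' e
  proof -
    have s': "s' \<in> {1..<t}" and e: "e < 2 * p s' - block_size t"
      using i unfolding lower_index_def by auto
    show ?thesis
    proof (cases "s' = s")
      case True
      then have "e < 2 * p s" using e by simp
      then show ?thesis using form_lower_vec_same_chain[OF s_chain earlier[OF s]] True by simp
    next
      case False
      have "annihilated (min s s')" using earlier[OF s] earlier[OF s'] by (simp add: min_def)
      then show ?thesis
        using form_lower_vec_other_chain[OF chain[OF s] chain[OF s']] False by auto
    qed
  qed
  have "B ?u (finsum (module_vec TYPE('k) nn) (\<lambda>i. c i \<cdot>\<^sub>v lower_vec i) (lower_index t))
      = (\<Sum>i\<in>lower_index t. c i * B ?u (lower_vec i))"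
    by (rule bilinear_on_finsum_right[OF B_bilinear w_carrier[OF chain[OF s]] finite_lower_index
        lower_vec_carrier[OF t]])
  also have "\<dots> = (\<Sum>(s', e)\<in>lower_index t. c (s', e) * (if s' = s then of_nat (v choose e) else 0))"
    by (rule sum.cong) (auto simp: pair)
  also have "\<dots> = (\<Sum>s'\<in>{1..<t}. \<Sum>e<2 * p s' - block_size t.
                      c (s', e) * (if s' = s then of_nat (v choose e) else 0))"
    unfolding lower_index_def by (subst sum.Sigma) auto
  also have "\<dots> = (\<Sum>s'\<in>{1..<t}. if s' = s then (\<Sum>e<2 * p s - block_size t. c (s, e) * of_nat (v choose e)) else 0)"
    by (rule sum.cong) auto
  also have "\<dots> = (\<Sum>e<2 * p s - block_size t. c (s, e) * of_nat (v choose e))"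
    using s by simp
  finally show ?thesis .
qed

lemma lower_combination_coeffs_zero:
  assumes t: "t \<in> {1..\<sigma>+\<kappa>}" and earlier: "\<And>s. s \<in> {1..<t} \<Longrightarrow> annihilated s"
    and orth: "\<And>s v. s \<in> {1..<t} \<Longrightarrow> B (w s (int (p s) - 1 - int v))
                 (finsum (module_vec TYPE('k) nn) (\<lambda>i. c i \<cdot>\<^sub>v lower_vec i) (lower_index t)) = 0"
  shows "\<forall>i\<in>lower_index t. c i = 0"
proof (clarify)
  fix s e assume i: "(s, e) \<in> lower_index t"
  then have s: "s \<in> {1..<t}" and e: "e < 2 * p s - block_size t" unfolding lower_index_def by auto
  show "c (s, e) = 0"
    by (rule binomial_combination_zero_imp_coeffs_zero[where c = "\<lambda>e. c (s, e)", OF _ e])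
      (use form_lower_combination[OF t earlier s] orth[OF s] in simp)
qed

lemma lower_vec_in_image:
  assumes t: "t \<in> {1..\<sigma>+\<kappa>}" and i: "i \<in> lower_index t"
  shows "\<exists>z\<in>carrier_vec nn. lower_vec i = (N ^\<^sub>m block_size t) *\<^sub>v z"
proof -
  obtain s e where ise: "i = (s, e)" by force
  have s: "s \<in> {1..\<sigma>+\<kappa>}" and e: "e < 2 * p s - block_size t"
    using lower_index_chain[OF i[unfolded ise] t] by auto
  let ?k = "block_size t" and ?z = "N ^\<^sub>m (2 * p s - 1 - e - block_size t) *\<^sub>v w s 0"
  have "2 * p s - 1 - e = ?k + (2 * p s - 1 - e - ?k)" using e by simp
  then have "lower_vec i = (N ^\<^sub>m ?k * N ^\<^sub>m (2 * p s - 1 - e - ?k)) *\<^sub>v w s 0"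
    unfolding ise lower_vec_Pair using pow_mat_add[OF N_carrier, of ?k] by metis
  also have "\<dots> = (N ^\<^sub>m ?k) *\<^sub>v ?z"
    by (rule assoc_mult_mat_vec[OF pow_carrier_mat[OF N_carrier] pow_carrier_mat[OF N_carrier] w_carrier[OF s]])
  finally show ?thesis using mult_mat_vec_carrier[OF pow_carrier_mat[OF N_carrier] w_carrier[OF s]] by blast
qed

text \<open>The count is exact: each Jordan block of size \<open>2p\<^sub>s > k\<close> contributes \<open>2p\<^sub>s - k\<close> to the
  rank of \<open>N\<^sup>k\<close>, and by monotonicity of \<open>p\<close> these are exactly the blocks with \<open>s < t\<close>.\<close>

lemma card_lower_index:
  assumes t: "t \<in> {1..\<sigma>+\<kappa>}"
  shows "nn \<le> card (lower_index t) + kernel_dim (N ^\<^sub>m block_size t)"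
proof -
  let ?k = "block_size t"
  have k: "?k \<ge> 1" using p_pos[of t] t unfolding block_size_def by auto
  have split: "2 * p s = (if s < t then 2 * p s - ?k else 0) + min ?k (2 * p s)"
    if s: "s \<in> {1..\<sigma>}" for s
    using p_mono[of s t] p_mono[of t s] p_pos[OF s] s t kappa unfolding block_size_def by auto
  have "(\<Sum>s\<in>{1..\<sigma>}. 2 * p s) = (\<Sum>s\<in>{1..\<sigma>}. (if s < t then 2 * p s - ?k else 0) + min ?k (2 * p s))"
    by (rule sum.cong[OF refl split])
  also have "\<dots> = (\<Sum>s\<in>{1..\<sigma>}. if s < t then 2 * p s - ?k else 0) + (\<Sum>s\<in>{1..\<sigma>}. min ?k (2 * p s))"
    by (rule sum.distrib)
  also have "(\<Sum>s\<in>{1..\<sigma>}. if s < t then 2 * p s - ?k else 0) = (\<Sum>s\<in>{1..\<sigma>} \<inter> {s. s < t}. 2 * p s - ?k)"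
    by (simp add: sum.inter_restrict)
  also have "{1..\<sigma>} \<inter> {s. s < t} = {1..<t}" using t kappa by auto
  also have "(\<Sum>s\<in>{1..<t}. 2 * p s - ?k) = card (lower_index t)"
    unfolding lower_index_def by (subst card_SigmaI) auto
  finally show ?thesis using sum_block_sizes kernel_dim_N_pow[OF k] by simp
qed

lemma form_earlier_chain_N_pow_zero:
  assumes s: "s \<in> {1..\<sigma>+\<kappa>}" and t: "t \<in> {1..\<sigma>+\<kappa>}" and st: "s < t"
    and ann: "annihilated s"
  shows "B (w s j) ((N ^\<^sub>m a) *\<^sub>v w t b) = 0"
proof -
  have "B (w s j) ((N ^\<^sub>m a) *\<^sub>v w t b) = (fwd_diff ^^ a) (\<lambda>m. B (w s j) (w t m)) b"
    unfolding N_pow_mult_w[OF t]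
    by (rule bilinear_on_funpow_fwd_diff_right[where w = "w t", OF B_bilinear w_carrier[OF s] w_carrier[OF t]])
  also have "(\<lambda>m. B (w s j) (w t m)) = (\<lambda>_. 0)"
  proof
    fix m
    show "B (w s j) (w t m) = 0"
      by (rule form_distinct_chains_zero[OF s t]) (use st ann in \<open>simp_all add: min_def\<close>)
  qed
  finally show ?thesis by (simp add: funpow_fwd_diff_zero)
qed

lemma lower_vec_independent:
  assumes t: "t \<in> {1..\<sigma>+\<kappa>}" and earlier: "\<And>s. s \<in> {1..<t} \<Longrightarrow> annihilated s"
    and zero: "finsum (module_vec TYPE('k) nn) (\<lambda>i. c i \<cdot>\<^sub>v lower_vec i) (lower_index t) = 0\<^sub>v nn"
  shows "\<forall>i\<in>lower_index t. c i = 0"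
proof (rule lower_combination_coeffs_zero[OF t earlier])
  fix s v assume "s \<in> {1..<t}"
  then have "s \<in> {1..\<sigma>+\<kappa>}" using t kappa by auto
  then show "B (w s (int (p s) - 1 - int v))
      (finsum (module_vec TYPE('k) nn) (\<lambda>i. c i \<cdot>\<^sub>v lower_vec i) (lower_index t)) = 0"
    unfolding zero by (rule bilinear_on_zero_right[OF B_bilinear w_carrier])
qed

lemma annihilated_if_earlier:
  assumes t: "t \<in> {1..\<sigma>+\<kappa>}" and earlier: "\<And>s. s \<in> {1..<t} \<Longrightarrow> annihilated s"
  shows "annihilated t"
  unfolding annihilated_def
proof
  fix b
  let ?V = "module_vec TYPE('k) nn" and ?M = "N ^\<^sub>m block_size t"
  have "\<exists>c. ?M *\<^sub>v w t b = finsum ?V (\<lambda>i. c i \<cdot>\<^sub>v lower_vec i) (lower_index t)"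
    by (rule mult_mat_vec_in_span_of_indep[OF pow_carrier_mat[OF N_carrier] finite_lower_index _
          lower_vec_independent[OF t earlier] lower_vec_in_image[OF t] card_lower_index[OF t] w_carrier[OF t]])
      (use lower_vec_carrier[OF t] in blast)
  then obtain c where c: "?M *\<^sub>v w t b = finsum ?V (\<lambda>i. c i \<cdot>\<^sub>v lower_vec i) (lower_index t)" ..
  have coeffs: "\<forall>i\<in>lower_index t. c i = 0"
  proof (rule lower_combination_coeffs_zero[OF t earlier])
    fix s v assume s: "s \<in> {1..<t}"
    then have "s \<in> {1..\<sigma>+\<kappa>}" "s < t" using t kappa by auto
    then show "B (w s (int (p s) - 1 - int v)) (finsum ?V (\<lambda>i. c i \<cdot>\<^sub>v lower_vec i) (lower_index t)) = 0"
      unfolding c[symmetric] by (rule form_earlier_chain_N_pow_zero[OF _ t _ earlier[OF s]])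
  qed
  have "finsum ?V (\<lambda>i. c i \<cdot>\<^sub>v lower_vec i) (lower_index t) = 0\<^sub>v nn"
    by (rule finsum_smult_zero_coeffs[where f = lower_vec]) (use lower_vec_carrier[OF t] coeffs in auto)
  then show "?M *\<^sub>v w t b = 0\<^sub>v nn" using c by simp
qed

lemma annihilated_chain: "t \<in> {1..\<sigma>+\<kappa>} \<Longrightarrow> annihilated t"
proof (induction t rule: less_induct)
  case (less t)
  show ?case
  proof (rule annihilated_if_earlier[OF less.prems])
    fix s assume "s \<in> {1..<t}"
    then show "annihilated s" using less.IH[of s] less.prems by auto
  qed
qed

lemma form_chain_binomial:
  assumes t: "t \<in> {1..\<sigma>}"
  shows "B (w t i) (w t j) = (if \<bar>j - i\<bar> \<ge> int (p t)
           then of_int (sg (j - i)) * of_nat ((nat \<bar>j - i\<bar> + p t - 1) choose (nat \<bar>j - i\<bar> - p t))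
           else 0)"
  using form_same_chain[OF t annihilated_chain] int_binomial_centered[OF p_pos[OF t], of "j - i"] t
  by simp

lemma form_extra_chain_zero:
  assumes k: "\<kappa> = 1" and diag: "(\<forall>x\<in>carrier_vec nn. B x x = 0) \<or> (2::'k) = 0"
  shows "B (w (\<sigma>+1) i) (w (\<sigma>+1) j) = 0"
proof -
  have r: "\<sigma>+1 \<in> {1..\<sigma>+\<kappa>}" using k by auto
  have "N *\<^sub>v w (\<sigma>+1) b = 0\<^sub>v nn" for b
    using annihilated_chain[OF r] N_carrier unfolding annihilated_def block_size_def by auto
  then have "g *\<^sub>v w (\<sigma>+1) b - w (\<sigma>+1) b = 0\<^sub>v nn" for b
    using minus_mult_distrib_mat_vec[OF g_carrier one_carrier_mat w_carrier[OF r]] w_carrier[OF r]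
    by simp
  then have "w (\<sigma>+1) (b + 1) = w (\<sigma>+1) b" for b
    using vec_eq_if_diff_zero[OF _ w_carrier[OF r]] g_carrier w_carrier[OF r] w_succ[OF r]
    by (simp add: mult_mat_vec_carrier)
  then have const: "w (\<sigma>+1) m = w (\<sigma>+1) 0" for m by (rule int_fun_const_if_shift_eq)
  have "B (w (\<sigma>+1) 0) (w (\<sigma>+1) 0) = 2" using adapt k unfolding adapted_def by blast
  then have "B (w (\<sigma>+1) 0) (w (\<sigma>+1) 0) = 0" using diag w_carrier[OF r] by auto
  then show ?thesis using const[of i] const[of j] by simp
qed

lemma form_distinct_chains:
  "t \<in> {1..\<sigma>+\<kappa>} \<Longrightarrow> r \<in> {1..\<sigma>+\<kappa>} \<Longrightarrow> t \<noteq> r \<Longrightarrow> B (w t i) (w r j) = 0"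
  by (rule form_distinct_chains_zero) (auto simp: min_def intro: annihilated_chain)

end

theorem proposition1p6:
  fixes nn n \<kappa> \<sigma> :: nat
    and B :: "'k::alg_closed_field vec \<Rightarrow> 'k vec \<Rightarrow> 'k"
    and Q :: "'k vec \<Rightarrow> 'k"
    and g :: "'k mat"
    and p :: "nat \<Rightarrow> nat"
    and n_as :: "(nat \<times> 'k) list"
    and w :: "nat \<Rightarrow> int \<Rightarrow> 'k vec"
  assumes dim: "nn \<ge> 3"
    and Bbil: "bilinear_on nn B"
    and Qquad: "quadratic_form_on nn Q"
    and cases: "((\<forall>x\<in>carrier_vec nn. Q x = 0) \<and> (\<forall>x\<in>carrier_vec nn. B x x = 0)
                   \<and> perp_space nn B = {0\<^sub>v nn})
              \<or> ((\<exists>x\<in>carrier_vec nn. Q x \<noteq> 0)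
                   \<and> (\<forall>x\<in>carrier_vec nn. \<forall>y\<in>carrier_vec nn. B x y = Q (x + y) - Q x - Q y)
                   \<and> inj_on Q (perp_space nn B))"
    and kappa: "\<kappa> \<in> {0, 1}"
    and nn_def: "nn = 2 * n + \<kappa>"
    and Q0_or_char2: "(\<forall>x\<in>carrier_vec nn. Q x = 0) \<or> (2::'k) = 0"
    and p_mono: "\<And>t s. 1 \<le> t \<Longrightarrow> t \<le> s \<Longrightarrow> s \<le> \<sigma> \<Longrightarrow> p s \<le> p t"
    and p_pos: "\<And>t. t \<in> {1..\<sigma>} \<Longrightarrow> p t \<ge> 1"
    and p_sum: "(\<Sum>t=1..\<sigma>. p t) = n"
    and g_Is: "g \<in> isometry_group nn B Q"
    and g_unip: "unipotent nn g"
    and jnf: "jordan_nf (g - 1\<^sub>m nn) n_as"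
    and blocks: "mset (map fst n_as) =
                   image_mset (\<lambda>t. 2 * p t) (mset_set {1..\<sigma>}) + (if \<kappa> = 1 then {#1#} else {#})"
    and adapt: "adapted nn B Q g \<kappa> \<sigma> p w"
  shows "(\<forall>t\<in>{1..\<sigma>}. \<forall>i j.
            B (w t i) (w t j) =
              (if \<bar>j - i\<bar> \<ge> int (p t)
               then of_int (sg (j - i)) *
                    of_nat ((nat \<bar>j - i\<bar> + p t - 1) choose (nat \<bar>j - i\<bar> - p t))
               else 0))
       \<and> (\<kappa> = 1 \<longrightarrow> (\<forall>i j. B (w (\<sigma>+1) i) (w (\<sigma>+1) j) = 0))
       \<and> (\<forall>t\<in>{1..\<sigma>+\<kappa>}. \<forall>r\<in>{1..\<sigma>+\<kappa>}. t \<noteq> r \<longrightarrow> (\<forall>i j. B (w t i) (w r j) = 0))"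
proof -
  have reflexive: "B y x = 0" if x: "x \<in> carrier_vec nn" and y: "y \<in> carrier_vec nn"
    and xy: "B x y = 0" for x y
    using cases
  proof
    assume "(\<forall>x\<in>carrier_vec nn. Q x = 0) \<and> (\<forall>x\<in>carrier_vec nn. B x x = 0) \<and> perp_space nn B = {0\<^sub>v nn}"
    then show ?thesis using alternating_bilinear_on_skew[OF Bbil _ x y] xy by simp
  next
    assume "(\<exists>x\<in>carrier_vec nn. Q x \<noteq> 0)
      \<and> (\<forall>x\<in>carrier_vec nn. \<forall>y\<in>carrier_vec nn. B x y = Q (x + y) - Q x - Q y) \<and> inj_on Q (perp_space nn B)"
    then have xy_eq: "B x y = Q (x + y) - Q x - Q y" and yx_eq: "B y x = Q (y + x) - Q y - Q x"
      using x y by blast+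
    have "B y x = B x y" unfolding xy_eq yx_eq comm_add_vec[OF y x] by (simp add: algebra_simps)
    then show ?thesis using xy by simp
  qed
  have diag: "(\<forall>x\<in>carrier_vec nn. B x x = 0) \<or> (2::'k) = 0"
    using cases Q0_or_char2 by blast
  have g_carrier: "g \<in> carrier_mat nn nn" using g_Is by (simp add: isometry_group_def)
  interpret adapted_collection nn \<kappa> \<sigma> B Q g p n_as w
    by (rule adapted_collection.intro)
      (fact Bbil reflexive kappa p_mono p_pos g_carrier g_unip jnf blocks adapt)+
  show ?thesis
    using form_chain_binomial form_extra_chain_zero[OF _ diag] form_distinct_chains by blast
qed

end
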